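(* Let $\theta\in[0,1]$, $\Delta t,\Delta x>0$, and $\mathcal A_\theta=I+\theta\Delta tD_+D_+D_-$. For every sequence $a\in\ell^2_\Delta(\mathbb Z)$, $$\|\mathcal A_\theta a\|^2_{\ell^2_\Delta}=\|a\|^2_{\ell^2_\Delta}+\theta\Delta t\Delta x\|D_+D_-(a)\|^2_{\ell^2_\Delta}+\theta^2\Delta t^2\|D_+D_+D_-(a)\|^2_{\ell^2_\Delta}.$$
   Context: For a sequence $a=(a_j)_{j\in\mathbb Z}$: $D_+(a)_j=(a_{j+1}-a_j)/\Delta x$, $D_-(a)_j=(a_j-a_{j-1})/\Delta x$; $\|a\|_{\ell^2_\Delta}=(\Delta x\sum_j a_j^2)^{1/2}$; $I$ is the identity. *)

theory Defs
  imports "HOL-Analysis.Analysis"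
begin

definition Dp :: "real \<Rightarrow> (int \<Rightarrow> real) \<Rightarrow> (int \<Rightarrow> real)" where
  "Dp dx a = (\<lambda>j. (a (j + 1) - a j) / dx)"

definition Dm :: "real \<Rightarrow> (int \<Rightarrow> real) \<Rightarrow> (int \<Rightarrow> real)" where
  "Dm dx a = (\<lambda>j. (a j - a (j - 1)) / dx)"

text \<open>Membership in the weighted space l^2_Delta(Z) (the weight dx > 0 does not affect membership).\<close>
definition in_l2 :: "(int \<Rightarrow> real) \<Rightarrow> bool" where
  "in_l2 a \<longleftrightarrow> (\<lambda>j. (a j)^2) summable_on UNIV"

definition l2norm :: "real \<Rightarrow> (int \<Rightarrow> real) \<Rightarrow> real" where
  "l2norm dx a = sqrt (dx * (\<Sum>\<^sub>\<infinity> j\<in>UNIV. (a j)^2))"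

definition Atheta :: "real \<Rightarrow> real \<Rightarrow> real \<Rightarrow> (int \<Rightarrow> real) \<Rightarrow> (int \<Rightarrow> real)" where
  "Atheta \<theta> dt dx a = (\<lambda>j. a j + \<theta> * dt * Dp dx (Dp dx (Dm dx a)) j)"

end

theory Submission
  imports Defs
begin

text \<open>Summation by parts gives \<open>\<langle>a, D\<^sub>+D\<^sub>+D\<^sub>-a\<rangle> = -\<langle>D\<^sub>-a, D\<^sub>+(D\<^sub>-a)\<rangle>\<close>, and for any
  \<open>c \<in> \<ell>\<^sup>2\<close> the identity \<open>(c\<^sub>j\<^sub>+\<^sub>1 - c\<^sub>j)\<^sup>2 = c\<^sub>j\<^sub>+\<^sub>1\<^sup>2 - c\<^sub>j\<^sup>2 - 2 c\<^sub>j (c\<^sub>j\<^sub>+\<^sub>1 - c\<^sub>j)\<close>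
  summed over \<open>j\<close> (the first two terms cancel by shift invariance) yields \<open>\<langle>c, D\<^sub>+c\<rangle> = -(\<Delta>x/2) \<parallel>D\<^sub>+c\<parallel>\<^sup>2\<close>.
  Expanding \<open>\<parallel>a + \<theta>\<Delta>t D\<^sub>+D\<^sub>+D\<^sub>-a\<parallel>\<^sup>2\<close> and inserting these two facts into the cross term gives
  the identity; it is purely algebraic, so of the hypotheses only \<open>\<Delta>x > 0\<close> is used.\<close>

definition l2_inner :: "(int \<Rightarrow> real) \<Rightarrow> (int \<Rightarrow> real) \<Rightarrow> real" where
  "l2_inner a b = (\<Sum>\<^sub>\<infinity> j\<in>UNIV. a j * b j)"

lemma summable_on_l2_product:
  assumes "in_l2 a" "in_l2 b"
  shows "(\<lambda>j. a j * b j) summable_on UNIV"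
proof -
  have "(\<lambda>j. norm (a j * a j)) summable_on UNIV" "(\<lambda>j. norm (b j * b j)) summable_on UNIV"
    using assms summable_on_iff_abs_summable_on_real
    by (auto simp: in_l2_def power2_eq_square)
  then show ?thesis
    using abs_summable_product summable_on_iff_abs_summable_on_real by blast
qed

lemma in_l2_lincomb:
  assumes "in_l2 a" "in_l2 b"
  shows "in_l2 (\<lambda>j. x * a j + y * b j)"
proof -
  have "(\<lambda>j. x\<^sup>2 * (a j * a j) + (2 * x * y * (a j * b j) + y\<^sup>2 * (b j * b j))) summable_on UNIV"
    using assms by (intro summable_on_add summable_on_cmult_right summable_on_l2_product)
  then show ?thesis
    unfolding in_l2_def by (simp add: power2_eq_square algebra_simps)
qed

lemma in_l2_shift:
  assumes "in_l2 a"
  shows "in_l2 (\<lambda>j. a (j + m))"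
proof -
  have "(\<lambda>j. (a (j + m))\<^sup>2) summable_on UNIV \<longleftrightarrow> (\<lambda>j. (a j)\<^sup>2) summable_on UNIV"
    by (rule summable_on_reindex_bij_witness[where i="\<lambda>j. j - m" and j="\<lambda>j. j + m"]) auto
  with assms show ?thesis
    unfolding in_l2_def by simp
qed

lemma Dp_eq_lincomb: "Dp dx a = (\<lambda>j. (1 / dx) * a (j + 1) + (- 1 / dx) * a j)"
  unfolding Dp_def by (simp add: diff_divide_distrib)

lemma Dm_eq_lincomb: "Dm dx a = (\<lambda>j. (1 / dx) * a j + (- 1 / dx) * a (j - 1))"
  unfolding Dm_def by (simp add: diff_divide_distrib)

lemma in_l2_Dp: "in_l2 a \<Longrightarrow> in_l2 (Dp dx a)"
  unfolding Dp_eq_lincomb by (intro in_l2_lincomb in_l2_shift)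

lemma in_l2_Dm: "in_l2 a \<Longrightarrow> in_l2 (Dm dx a)"
  using in_l2_shift[of a "- 1"] unfolding Dm_eq_lincomb by (intro in_l2_lincomb) simp_all

lemma l2_inner_commute: "l2_inner a b = l2_inner b a"
  unfolding l2_inner_def by (simp add: mult.commute)

lemma l2_inner_shift: "l2_inner (\<lambda>j. a (j + m)) (\<lambda>j. b (j + m)) = l2_inner a b"
  unfolding l2_inner_def
  by (rule infsum_reindex_bij_witness[where i="\<lambda>j. j - m" and j="\<lambda>j. j + m"]) auto

lemma l2_inner_lincomb_right:
  assumes "in_l2 a" "in_l2 b" "in_l2 c"
  shows "l2_inner a (\<lambda>j. x * b j + y * c j) = x * l2_inner a b + y * l2_inner a c"
proof -
  have "l2_inner a (\<lambda>j. x * b j + y * c j) = (\<Sum>\<^sub>\<infinity> j\<in>UNIV. x * (a j * b j) + y * (a j * c j))"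
    unfolding l2_inner_def by (simp add: algebra_simps)
  also have "\<dots> = x * l2_inner a b + y * l2_inner a c"
    using assms unfolding l2_inner_def
    by (simp add: infsum_add infsum_cmult_right' summable_on_cmult_right summable_on_l2_product)
  finally show ?thesis .
qed

lemma l2_inner_lincomb_self:
  assumes "in_l2 a" "in_l2 b"
  shows "l2_inner (\<lambda>j. x * a j + y * b j) (\<lambda>j. x * a j + y * b j)
       = x\<^sup>2 * l2_inner a a + 2 * x * y * l2_inner a b + y\<^sup>2 * l2_inner b b"
proof -
  define u where "u = (\<lambda>j. x * a j + y * b j)"
  have "in_l2 u"
    unfolding u_def using assms by (rule in_l2_lincomb)
  then have "l2_inner u u = x * l2_inner u a + y * l2_inner u b"
    using assms unfolding u_def by (simp add: l2_inner_lincomb_right)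
  also have "l2_inner u a = x * l2_inner a a + y * l2_inner a b"
    unfolding l2_inner_commute[of u a] unfolding u_def using assms(1,1,2) by (rule l2_inner_lincomb_right)
  also have "l2_inner u b = x * l2_inner a b + y * l2_inner b b"
    unfolding l2_inner_commute[of u b] unfolding u_def using assms
    by (simp add: l2_inner_lincomb_right l2_inner_commute[of b a])
  finally show ?thesis
    unfolding u_def by (simp add: power2_eq_square algebra_simps)
qed

lemma l2_inner_Dp_right:
  assumes "in_l2 a" "in_l2 b"
  shows "l2_inner a (Dp dx b) = - l2_inner (Dm dx a) b"
proof -
  have "l2_inner a (Dp dx b) = 1 / dx * l2_inner a (\<lambda>j. b (j + 1)) + - 1 / dx * l2_inner a b"
    unfolding Dp_eq_lincomb using assms in_l2_shift[OF assms(2)] by (intro l2_inner_lincomb_right)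
  moreover have "l2_inner (Dm dx a) b = 1 / dx * l2_inner b a + - 1 / dx * l2_inner b (\<lambda>j. a (j - 1))"
    unfolding l2_inner_commute[of _ b] Dm_eq_lincomb using assms in_l2_shift[OF assms(1), of "- 1"]
    by (intro l2_inner_lincomb_right) simp_all
  moreover have "l2_inner b (\<lambda>j. a (j - 1)) = l2_inner a (\<lambda>j. b (j + 1))"
    using l2_inner_shift[of "\<lambda>j. a (j - 1)" 1 b] by (simp add: l2_inner_commute[of b])
  ultimately show ?thesis
    by (simp add: l2_inner_commute[of b a] algebra_simps)
qed

lemma l2_inner_Dp_self:
  assumes "in_l2 c" "dx \<noteq> 0"
  shows "l2_inner c (Dp dx c) = - dx / 2 * l2_inner (Dp dx c) (Dp dx c)"
proof -
  have s: "in_l2 (\<lambda>j. c (j + 1))"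
    using assms(1) by (rule in_l2_shift)
  have "l2_inner c (Dp dx c) = 1 / dx * l2_inner c (\<lambda>j. c (j + 1)) + - 1 / dx * l2_inner c c"
    unfolding Dp_eq_lincomb using assms(1) s assms(1) by (rule l2_inner_lincomb_right)
  moreover have "l2_inner (Dp dx c) (Dp dx c)
      = (1 / dx)\<^sup>2 * l2_inner (\<lambda>j. c (j + 1)) (\<lambda>j. c (j + 1))
        + 2 * (1 / dx) * (- 1 / dx) * l2_inner (\<lambda>j. c (j + 1)) c + (- 1 / dx)\<^sup>2 * l2_inner c c"
    unfolding Dp_eq_lincomb using s assms(1) by (rule l2_inner_lincomb_self)
  ultimately have "dx * l2_inner c (Dp dx c) = dx * (- dx / 2 * l2_inner (Dp dx c) (Dp dx c))"
    using assms(2) l2_inner_shift[of c 1 c]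
    by (simp add: l2_inner_commute[of "\<lambda>j. c (j + 1)" c] power2_eq_square field_simps)
  then show ?thesis
    using assms(2) mult_left_cancel by blast
qed

lemma l2norm_squared: "dx \<ge> 0 \<Longrightarrow> (l2norm dx b)\<^sup>2 = dx * l2_inner b b"
  unfolding l2norm_def l2_inner_def
  by (simp add: power2_eq_square infsum_nonneg)

theorem proposition4:
  fixes \<theta> dt dx :: real and a :: "int \<Rightarrow> real"
  assumes "0 \<le> \<theta>" "\<theta> \<le> 1" "dt > 0" "dx > 0"
    and "in_l2 a"
  shows "(l2norm dx (Atheta \<theta> dt dx a))^2
       = (l2norm dx a)^2 + \<theta> * dt * dx * (l2norm dx (Dp dx (Dm dx a)))^2
         + \<theta>^2 * dt^2 * (l2norm dx (Dp dx (Dp dx (Dm dx a))))^2"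
proof -
  define c where "c = Dm dx a"
  define k where "k = \<theta> * dt"
  have c: "in_l2 c"
    unfolding c_def using assms(5) by (rule in_l2_Dm)
  then have Dc: "in_l2 (Dp dx c)"
    by (rule in_l2_Dp)
  then have DDc: "in_l2 (Dp dx (Dp dx c))"
    by (rule in_l2_Dp)
  have cross: "l2_inner a (Dp dx (Dp dx c)) = dx / 2 * l2_inner (Dp dx c) (Dp dx c)"
    using l2_inner_Dp_right[OF assms(5) Dc] l2_inner_Dp_self[OF c] assms(4)
    by (simp add: c_def)
  have "Atheta \<theta> dt dx a = (\<lambda>j. 1 * a j + k * Dp dx (Dp dx c) j)"
    unfolding Atheta_def c_def k_def by simp
  then have "l2_inner (Atheta \<theta> dt dx a) (Atheta \<theta> dt dx a)
      = l2_inner a a + k * dx * l2_inner (Dp dx c) (Dp dx c) + k\<^sup>2 * l2_inner (Dp dx (Dp dx c)) (Dp dx (Dp dx c))"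
    using l2_inner_lincomb_self[OF assms(5) DDc, of 1 k] cross by simp
  then show ?thesis
    using assms(4) unfolding l2norm_squared[OF less_imp_le[OF assms(4)]] c_def k_def
    by (simp add: power2_eq_square algebra_simps)
qed

end
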